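(* Let $\ell\geq 2$ be an integer. Then $\mathbb{O}_2(\ell,\mathbb{Q})\neq\emptyset$ if and only if the factorization of $\ell$ into powers of distinct primes is of the form $\ell=p_1^{k_1}\cdots p_r^{k_r}$ with $p_i\equiv 1\bmod 4$ for every $i\leq r$. In that case, $\#\mathbb{O}_2(\ell,\mathbb{Q})=2^{r+3}$, where $r$ is the number of distinct prime factors of $\ell$.
   Context: The level of a rational matrix $Q$ is the least integer $\ell\geq 1$ with $\ell Q$ having integer entries. $\mathbb{O}_n(\ell,\mathbb{Q})$ denotes the set of all rational orthogonal $n\times n$ matrices with level $\ell$. *)

theory Defs
  imports "HOL-Analysis.Analysis" "HOL-Computational_Algebra.Primes"
begin

definition rat_orthogonal :: "rat^'n^'n \<Rightarrow> bool" where
  "rat_orthogonal Q \<longleftrightarrow> transpose Q ** Q = mat 1 \<and> Q ** transpose Q = mat 1"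

definition int_matrix :: "rat^'n^'m \<Rightarrow> bool" where
  "int_matrix A \<longleftrightarrow> (\<forall>i j. A $ i $ j \<in> \<int>)"

definition level :: "rat^'n^'m \<Rightarrow> nat" where
  "level Q = (LEAST l::nat. l \<ge> 1 \<and> int_matrix (\<chi> i j. (of_nat l :: rat) * Q $ i $ j))"

definition orth_level :: "nat \<Rightarrow> (rat^'n^'n) set" where
  "orth_level l = {Q. rat_orthogonal Q \<and> level Q = l}"

end

(*
  A rational orthogonal 2 x 2 matrix is a rotation or a reflection whose first column is
  (x / l, y / l) with x^2 + y^2 = l^2, and its level is l exactly when x and y are coprime.
  So O_2(l, Q) is in 2 : 1 correspondence with the primitive representations of l^2 as a sum
  of two squares. Each primitive representation (x, y) determines the square root t of -1
  modulo l^2 with x = t y, and every such root comes from exactly four representations, which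
  differ by a Gaussian unit; existence is a pigeonhole argument (Thue's lemma). By the Chinese
  remainder theorem, Euler's criterion and Hensel lifting, -1 has 2^r square roots modulo l^2
  if every prime factor of l is 1 mod 4, and none otherwise. Hence #O_2(l, Q) = 2 * 4 * 2^r.
*)
theory Submission
  imports Defs "HOL-Number_Theory.Number_Theory"
begin

section \<open>Square roots of -1 modulo m\<close>

definition sqrts_minus_one :: "int \<Rightarrow> int set" where
  "sqrts_minus_one m = {t. 0 \<le> t \<and> t < m \<and> m dvd t\<^sup>2 + 1}"

lemma finite_sqrts_minus_one: "finite (sqrts_minus_one m)"
  unfolding sqrts_minus_one_def by (rule finite_subset[of _ "{0..m}"]) auto

lemma cong_dvd_sqr_plus_one:
  fixes s t m :: int
  assumes "[s = t] (mod m)"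
  shows "m dvd s\<^sup>2 + 1 \<longleftrightarrow> m dvd t\<^sup>2 + 1"
  using assms by (intro cong_dvd_iff cong_add cong_pow) auto

lemma mod_in_sqrts_minus_one:
  assumes "m > 0" "m dvd t\<^sup>2 + 1"
  shows "t mod m \<in> sqrts_minus_one m"
proof -
  have "[t mod m = t] (mod m)"
    by (simp add: cong_def)
  then have "m dvd (t mod m)\<^sup>2 + 1"
    using assms(2) cong_dvd_sqr_plus_one by blast
  then show ?thesis
    using assms(1) unfolding sqrts_minus_one_def by simp
qed

lemma bij_betw_sqrts_minus_one_mult:
  fixes a b :: int
  assumes "coprime a b" "a > 0" "b > 0"
  shows "bij_betw (\<lambda>t. (t mod a, t mod b))
           (sqrts_minus_one (a * b)) (sqrts_minus_one a \<times> sqrts_minus_one b)"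
proof (rule bij_betwI')
  fix s t assume s: "s \<in> sqrts_minus_one (a * b)" and t: "t \<in> sqrts_minus_one (a * b)"
  show "(s mod a, s mod b) = (t mod a, t mod b) \<longleftrightarrow> s = t"
  proof
    assume "(s mod a, s mod b) = (t mod a, t mod b)"
    then have "[s = t] (mod a)" "[s = t] (mod b)"
      unfolding cong_def by simp_all
    then have "[s = t] (mod a * b)"
      using assms(1) by (rule coprime_cong_mult)
    then show "s = t"
      using s t unfolding sqrts_minus_one_def by (auto intro: cong_less_imp_eq_int)
  qed simp
next
  fix t assume "t \<in> sqrts_minus_one (a * b)"
  then have "a dvd t\<^sup>2 + 1" "b dvd t\<^sup>2 + 1"
    unfolding sqrts_minus_one_def by (auto dest: dvd_mult_left dvd_mult_right)
  then show "(t mod a, t mod b) \<in> sqrts_minus_one a \<times> sqrts_minus_one b"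
    using assms(2,3) by (simp add: mod_in_sqrts_minus_one)
next
  fix p assume "p \<in> sqrts_minus_one a \<times> sqrts_minus_one b"
  then obtain u v where p: "p = (u, v)" and u: "u \<in> sqrts_minus_one a"
    and v: "v \<in> sqrts_minus_one b" by blast
  obtain x where x: "[x = u] (mod a)" "[x = v] (mod b)"
    using binary_chinese_remainder_int[OF assms(1)] by blast
  have "a dvd x\<^sup>2 + 1" "b dvd x\<^sup>2 + 1"
    using u v cong_dvd_sqr_plus_one[OF x(1)] cong_dvd_sqr_plus_one[OF x(2)]
    unfolding sqrts_minus_one_def by simp_all
  then have "x mod (a * b) \<in> sqrts_minus_one (a * b)"
    using assms by (intro mod_in_sqrts_minus_one divides_mult) simp_all
  moreover have "p = (x mod (a * b) mod a, x mod (a * b) mod b)"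
    using x u v unfolding p sqrts_minus_one_def cong_def by (simp add: mod_mod_cancel)
  ultimately show "\<exists>t \<in> sqrts_minus_one (a * b). p = (t mod a, t mod b)"
    by blast
qed

lemma card_sqrts_minus_one_mult:
  fixes a b :: int
  assumes "coprime a b" "a > 0" "b > 0"
  shows "card (sqrts_minus_one (a * b)) = card (sqrts_minus_one a) * card (sqrts_minus_one b)"
  using bij_betw_same_card[OF bij_betw_sqrts_minus_one_mult[OF assms]]
  by (simp add: card_cartesian_product)

lemma card_sqrts_minus_one_prod:
  fixes f :: "'a \<Rightarrow> int"
  assumes "finite A" "\<And>i. i \<in> A \<Longrightarrow> f i > 0" "pairwise (\<lambda>i j. coprime (f i) (f j)) A"
  shows "card (sqrts_minus_one (\<Prod>i\<in>A. f i)) = (\<Prod>i\<in>A. card (sqrts_minus_one (f i)))"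
  using assms
proof (induction A rule: finite_induct)
  case empty
  have "sqrts_minus_one 1 = {0}"
    unfolding sqrts_minus_one_def by auto
  then show ?case by simp
next
  case (insert i A)
  have "coprime (f i) (\<Prod>j\<in>A. f j)"
    using insert.hyps(2) insert.prems(2) by (intro prod_coprime_right) (auto simp: pairwise_insert)
  then show ?case
    using insert by (simp add: card_sqrts_minus_one_mult prod_pos pairwise_insert)
qed

lemma exists_sqrt_minus_one_mod_prime_iff:
  fixes p :: nat
  assumes "prime p" "p > 2"
  shows "(\<exists>t::int. int p dvd t\<^sup>2 + 1) \<longleftrightarrow> p mod 4 = 1"
proof -
  have euler: "[Legendre (-1) (int p) = (-1) ^ ((p - 1) div 2)] (mod int p)"
    using euler_criterion[OF assms] by simp
  have "\<not> [-1 = 0] (mod int p)" "\<not> [1 = -1] (mod int p)" "\<not> [-1 = 1] (mod int p)"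
    using assms by (auto simp: cong_iff_dvd_diff dest: zdvd_imp_le)
  then have "QuadRes (int p) (-1) \<longleftrightarrow> even ((p - 1) div 2)"
    using euler unfolding Legendre_def by (cases "even ((p - 1) div 2)") (auto split: if_splits)
  also have "\<dots> \<longleftrightarrow> p mod 4 = 1"
    using prime_odd_nat[OF assms(1)] assms(2) by presburger
  finally show ?thesis
    unfolding QuadRes_def by (simp add: cong_iff_dvd_diff)
qed

lemma not_four_dvd_sqr_plus_one: "\<not> (4::int) dvd t\<^sup>2 + 1"
proof -
  have "t mod 4 \<in> {0, 1, 2, 3}" by auto
  then have "(t\<^sup>2 + 1) mod 4 \<noteq> 0"
    by (auto simp: power_mod[of t 4 2, symmetric] mod_add_left_eq[of "t\<^sup>2" 4 1, symmetric])
  then show ?thesis by (simp add: dvd_eq_mod_eq_0)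
qed

lemma lift_sqrt_minus_one:
  fixes p t :: int
  assumes "prime p" "odd p" "e \<ge> 1" "p ^ e dvd t\<^sup>2 + 1"
  shows "\<exists>s. p ^ (e + 1) dvd s\<^sup>2 + 1"
proof -
  obtain q where q: "t\<^sup>2 + 1 = p ^ e * q"
    using assms(4) by blast
  have "p dvd t\<^sup>2 + 1"
    using dvd_trans[OF dvd_power[of e p] assms(4)] assms(3) by simp
  then have "\<not> p dvd t"
    using assms(1) by (auto simp: power2_eq_square dvd_add_right_iff)
  moreover have "\<not> p dvd 2"
    using assms(1,2) primes_dvd_imp_eq[of p 2] by auto
  ultimately have "coprime (2 * t) p"
    using assms(1,2) by (simp add: prime_dvd_mult_iff prime_imp_coprime coprime_commute)
  then obtain w where w: "[2 * t * w = 1] (mod p)"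
    using cong_solve_coprime_int by blast
  txt \<open>Hensel's step: as w inverts 2 t modulo p, the correction kills t^2 + 1 modulo
    p ^ (e + 1).\<close>
  define s where "s = t - q * w * p ^ e"
  have "s\<^sup>2 + 1 = (t\<^sup>2 + 1) - 2 * t * w * (p ^ e * q) + p ^ (e + e) * (q * w)\<^sup>2"
    unfolding s_def power_add by (simp add: power2_eq_square algebra_simps)
  also have "\<dots> = p ^ e * (q * (1 - 2 * t * w)) + p ^ (e + e) * (q * w)\<^sup>2"
    unfolding q by (simp add: algebra_simps)
  finally have s: "s\<^sup>2 + 1 = p ^ e * (q * (1 - 2 * t * w)) + p ^ (e + e) * (q * w)\<^sup>2" .
  have "p ^ (e + 1) dvd p ^ e * (q * (1 - 2 * t * w))"
    using w by (simp add: mult_dvd_mono cong_iff_dvd_diff dvd_diff_commute)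
  moreover have "p ^ (e + 1) dvd p ^ (e + e) * (q * w)\<^sup>2"
    using assms(3) by (intro dvd_mult2 le_imp_power_dvd) simp
  ultimately have "p ^ (e + 1) dvd s\<^sup>2 + 1"
    unfolding s by (rule dvd_add)
  then show ?thesis ..
qed

lemma exists_sqrt_minus_one_mod_prime_power:
  fixes p :: nat
  assumes "prime p" "p mod 4 = 1"
  shows "\<exists>t::int. int p ^ e dvd t\<^sup>2 + 1"
proof (induction e)
  case 0
  show ?case by simp
next
  case (Suc e)
  have "p > 2"
    using assms prime_ge_2_nat[OF assms(1)] by (cases "p = 2") auto
  show ?case
  proof (cases "e = 0")
    case True
    then show ?thesis
      using exists_sqrt_minus_one_mod_prime_iff[OF assms(1) \<open>p > 2\<close>] assms(2) by simp
  next
    case False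
    moreover have "prime (int p)"
      using assms(1) by simp
    moreover have "odd (int p)"
      using assms(2) by presburger
    ultimately show ?thesis
      using Suc.IH lift_sqrt_minus_one[of "int p" e] by auto
  qed
qed

lemma cong_sqrt_minus_one_prime_power:
  fixes p s t :: int
  assumes "prime p" "odd p" "p ^ e dvd s\<^sup>2 + 1" "p ^ e dvd t\<^sup>2 + 1"
  shows "[s = t] (mod p ^ e) \<or> [s = -t] (mod p ^ e)"
proof (cases "e = 0")
  case False
  have "p ^ e dvd (s - t) * (s + t)"
    using dvd_diff[OF assms(3,4)] by (simp add: power2_eq_square algebra_simps)
  moreover have "\<not> (p dvd s - t \<and> p dvd s + t)"
  proof
    assume "p dvd s - t \<and> p dvd s + t"
    then have "p dvd 2 * s"
      using dvd_add[of p "s - t" "s + t"] by simp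
    then have "p dvd s"
      using assms(1,2) primes_dvd_imp_eq[of p 2] by (auto simp: prime_dvd_mult_iff)
    moreover have "p dvd s\<^sup>2 + 1"
      using dvd_trans[OF dvd_power[of e p] assms(3)] False by simp
    ultimately show False
      using assms(1) by (auto simp: power2_eq_square dvd_add_right_iff)
  qed
  ultimately show ?thesis
    using assms(1) prime_imp_coprime[of p] unfolding cong_iff_dvd_diff
    by (auto simp: coprime_dvd_mult_left_iff coprime_dvd_mult_right_iff)
qed simp

lemma card_sqrts_minus_one_prime_power:
  fixes p :: nat
  assumes "prime p" "p mod 4 = 1" "e \<ge> 1"
  shows "card (sqrts_minus_one (int p ^ e)) = 2"
proof -
  define m where "m = int p ^ e"
  have p: "prime (int p)" "odd (int p)"
    using assms(1,2) by (simp, presburger)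
  then have "m > 1" "odd m"
    unfolding m_def using assms(3) prime_gt_1_int[OF p(1)] by (auto simp: one_less_power)
  obtain y where "m dvd y\<^sup>2 + 1"
    using exists_sqrt_minus_one_mod_prime_power[OF assms(1,2)] unfolding m_def by blast
  define t where "t = y mod m"
  have t: "t \<in> sqrts_minus_one m"
    unfolding t_def using mod_in_sqrts_minus_one \<open>m > 1\<close> \<open>m dvd y\<^sup>2 + 1\<close> by simp
  then have "t \<noteq> 0"
    using \<open>m > 1\<close> unfolding sqrts_minus_one_def by auto
  have "[m - t = -t] (mod m)"
    by (simp add: cong_iff_dvd_diff)
  then have t': "m - t \<in> sqrts_minus_one m"
    using t \<open>t \<noteq> 0\<close> cong_dvd_sqr_plus_one unfolding sqrts_minus_one_def by auto
  have "sqrts_minus_one m \<subseteq> {t, m - t}"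
  proof
    fix s assume s: "s \<in> sqrts_minus_one m"
    then have "[s = t] (mod m) \<or> [s = m - t] (mod m)"
      using cong_sqrt_minus_one_prime_power[OF p, of e s t] t
        cong_trans[OF _ cong_sym[OF \<open>[m - t = -t] (mod m)\<close>]]
      unfolding m_def sqrts_minus_one_def by blast
    then show "s \<in> {t, m - t}"
      using s t t' cong_less_imp_eq_int unfolding sqrts_minus_one_def by blast
  qed
  moreover have "t \<noteq> m - t"
    using \<open>odd m\<close> by auto
  ultimately have "card (sqrts_minus_one m) = 2"
    using t t' subset_antisym[of "sqrts_minus_one m" "{t, m - t}"] by simp
  then show ?thesis
    unfolding m_def .
qed

lemma card_sqrts_minus_one:
  fixes m :: nat
  assumes "m > 0" "\<forall>p \<in> prime_factors m. p mod 4 = 1"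
  shows "card (sqrts_minus_one (int m)) = 2 ^ card (prime_factors m)"
proof -
  have "int m = int (\<Prod>p \<in> prime_factors m. p ^ multiplicity p m)"
    using prime_factorization_nat[OF assms(1)] by (rule arg_cong)
  also have "\<dots> = (\<Prod>p \<in> prime_factors m. int p ^ multiplicity p m)"
    by simp
  finally have m: "int m = (\<Prod>p \<in> prime_factors m. int p ^ multiplicity p m)" .
  have "pairwise (\<lambda>p q. coprime (int p ^ multiplicity p m) (int q ^ multiplicity q m))
                   (prime_factors m)"
    by (auto simp: pairwise_def intro: primes_coprime)
  then have "card (sqrts_minus_one (int m))
      = (\<Prod>p \<in> prime_factors m. card (sqrts_minus_one (int p ^ multiplicity p m)))"
    unfolding m by (intro card_sqrts_minus_one_prod) (auto dest: in_prime_factors_imp_prime prime_gt_0_nat)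
  also have "\<dots> = (\<Prod>p \<in> prime_factors m. 2)"
    using assms(2) by (intro prod.cong card_sqrts_minus_one_prime_power)
      (auto simp: prime_factors_multiplicity)
  finally show ?thesis
    by simp
qed

lemma sqrts_minus_one_square_eq_empty:
  fixes l p :: nat
  assumes "p \<in> prime_factors l" "p mod 4 \<noteq> 1"
  shows "sqrts_minus_one (int l ^ 2) = {}"
proof -
  have p: "prime p" "int p ^ 2 dvd int l ^ 2"
    using assms(1) by auto
  have "\<not> int p ^ 2 dvd t\<^sup>2 + 1" for t
  proof (cases "p = 2")
    case True
    then show ?thesis
      using not_four_dvd_sqr_plus_one by simp
  next
    case False
    then have "\<not> int p dvd t\<^sup>2 + 1"
      using exists_sqrt_minus_one_mod_prime_iff[of p] prime_ge_2_nat[OF p(1)] assms(2) p(1) by auto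
    then show ?thesis
      using dvd_trans[OF dvd_power[of 2 "int p"]] by auto
  qed
  then show ?thesis
    unfolding sqrts_minus_one_def using dvd_trans[OF p(2)] by blast
qed

section \<open>Primitive representations as a sum of two squares\<close>

definition prim_reps :: "int \<Rightarrow> (int \<times> int) set" where
  "prim_reps n = {(x, y). x\<^sup>2 + y\<^sup>2 = n \<and> coprime x y}"

lemma finite_prim_reps: "finite (prim_reps n)"
proof (rule finite_subset)
  have abs_le: "\<bar>x\<bar> \<le> x\<^sup>2" for x :: int
  proof (cases "x = 0")
    case False
    then have "\<bar>x\<bar> * 1 \<le> \<bar>x\<bar> * \<bar>x\<bar>"
      by (intro mult_left_mono) auto
    then show ?thesis
      by (simp add: power2_eq_square)
  qed simp
  show "prim_reps n \<subseteq> {-n..n} \<times> {-n..n}"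
  proof
    fix p assume "p \<in> prim_reps n"
    then obtain x y where "p = (x, y)" "x\<^sup>2 + y\<^sup>2 = n"
      unfolding prim_reps_def by auto
    then show "p \<in> {-n..n} \<times> {-n..n}"
      using abs_le[of x] abs_le[of y] zero_le_power2[of x] zero_le_power2[of y] by auto
  qed
qed simp

lemma prim_rep_coprime:
  assumes "(x, y) \<in> prim_reps n"
  shows "coprime y n"
proof -
  have "n = y * y + x\<^sup>2" "coprime y (x\<^sup>2)"
    using assms unfolding prim_reps_def by (auto simp: coprime_commute power2_eq_square)
  then show ?thesis
    by (simp add: coprime_iff_gcd_eq_1 gcd_add_mult)
qed

lemma sqrt_minus_one_of_prim_rep:
  assumes "(x, y) \<in> prim_reps n" "n > 0"
  obtains t where "t \<in> sqrts_minus_one n" "[x = t * y] (mod n)"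
proof -
  have n: "x\<^sup>2 + y\<^sup>2 = n"
    using assms(1) unfolding prim_reps_def by simp
  have cop: "coprime y n"
    using assms(1) by (rule prim_rep_coprime)
  obtain w where w: "[y * w = 1] (mod n)"
    using cong_solve_coprime_int[OF cop] by blast
  define t where "t = x * w mod n"
  have "[t * y = x * (y * w)] (mod n)"
    unfolding t_def cong_def by (simp add: mod_mult_left_eq mod_mult_right_eq ac_simps)
  also have "[x * (y * w) = x * 1] (mod n)"
    using w by (intro cong_mult cong_refl)
  finally have ty: "[x = t * y] (mod n)"
    by (simp add: cong_sym_eq)
  have "[(t\<^sup>2 + 1) * y\<^sup>2 = x\<^sup>2 + y\<^sup>2] (mod n)"
    using cong_add[OF cong_pow[OF cong_sym[OF ty], of 2] cong_refl[of "y\<^sup>2"]]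
    by (simp add: power_mult_distrib algebra_simps)
  then have "n dvd (t\<^sup>2 + 1) * y\<^sup>2"
    using cong_dvd_iff[of "(t\<^sup>2 + 1) * y\<^sup>2" "x\<^sup>2 + y\<^sup>2" n] n by simp
  then have "n dvd t\<^sup>2 + 1"
    using cop by (simp add: coprime_dvd_mult_left_iff coprime_commute)
  then have "t mod n \<in> sqrts_minus_one n"
    by (rule mod_in_sqrts_minus_one[OF assms(2)])
  then have "t \<in> sqrts_minus_one n"
    by (simp add: t_def)
  then show thesis
    using that ty by blast
qed

lemma sqrt_minus_one_of_prim_rep_unique:
  assumes "(x, y) \<in> prim_reps n" "s \<in> sqrts_minus_one n" "t \<in> sqrts_minus_one n"
    "[x = s * y] (mod n)" "[x = t * y] (mod n)"
  shows "s = t"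
proof -
  have "[s * y = t * y] (mod n)"
    using cong_trans[OF cong_sym[OF assms(4)] assms(5)] .
  then have "[s = t] (mod n)"
    using prim_rep_coprime[OF assms(1)] cong_mult_rcancel by blast
  then show ?thesis
    using assms(2,3) cong_less_imp_eq_int unfolding sqrts_minus_one_def by blast
qed

lemma prim_rep_rotate:
  assumes "(x, y) \<in> prim_reps n" "n dvd t\<^sup>2 + 1" "[x = t * y] (mod n)"
  shows "(-y, x) \<in> prim_reps n" "[-y = t * x] (mod n)"
proof -
  show "(-y, x) \<in> prim_reps n"
    using assms(1) unfolding prim_reps_def by (auto simp: coprime_commute add.commute)
  have "-y - t * x = - (t * (x - t * y) + (t\<^sup>2 + 1) * y)"
    by (simp add: power2_eq_square algebra_simps)
  moreover have "n dvd t * (x - t * y) + (t\<^sup>2 + 1) * y"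
    using assms(2,3) by (simp add: cong_iff_dvd_diff)
  ultimately show "[-y = t * x] (mod n)"
    unfolding cong_iff_dvd_diff by (metis dvd_minus_iff)
qed

lemma sum_squares_eq_one_int:
  fixes c d :: int
  assumes "c\<^sup>2 + d\<^sup>2 = 1"
  shows "(c, d) \<in> {(1, 0), (0, 1), (-1, 0), (0, -1)}"
proof -
  have "c\<^sup>2 \<le> 1" "d\<^sup>2 \<le> 1"
    using assms zero_le_power2[of c] zero_le_power2[of d] by linarith+
  then have "\<bar>c\<bar> \<le> 1" "\<bar>d\<bar> \<le> 1"
    by (simp_all add: abs_square_le_1)
  then have "c \<in> {-1, 0, 1}" "d \<in> {-1, 0, 1}"
    by auto
  then show ?thesis
    using assms by auto
qed

text \<open>Over the Gaussian integers the hypotheses say that n = (x + yi)(x - yi) divides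
  (a + bi)(x - yi) = (ax + by) + (bx - ay)i, so (a + bi) / (x + yi) = c + di is a Gaussian integer
  of norm 1, i.e.\ a unit.\<close>
lemma sum_squares_unit_multiple:
  fixes n x y a b :: int
  assumes "n > 0" "x\<^sup>2 + y\<^sup>2 = n" "a\<^sup>2 + b\<^sup>2 = n" "n dvd a * x + b * y" "n dvd b * x - a * y"
  shows "(a, b) \<in> {(x, y), (-y, x), (-x, -y), (y, -x)}"
proof -
  obtain c d where c: "a * x + b * y = n * c" and d: "b * x - a * y = n * d"
    using assms(4,5) by (elim dvdE)
  have "n\<^sup>2 * (c\<^sup>2 + d\<^sup>2) = (a * x + b * y)\<^sup>2 + (b * x - a * y)\<^sup>2"
    unfolding c d by (simp add: power2_eq_square algebra_simps)
  also have "\<dots> = (a\<^sup>2 + b\<^sup>2) * (x\<^sup>2 + y\<^sup>2)"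
    by (simp add: power2_eq_square algebra_simps)
  also have "\<dots> = n\<^sup>2 * 1"
    unfolding assms(2,3) by (simp add: power2_eq_square)
  finally have "c\<^sup>2 + d\<^sup>2 = 1"
    using assms(1) by (simp only: mult_cancel_left) simp
  have "n * a = (a * x + b * y) * x - (b * x - a * y) * y"
    unfolding assms(2)[symmetric] by (simp add: power2_eq_square algebra_simps)
  also have "\<dots> = n * (c * x - d * y)"
    unfolding c d by (simp add: algebra_simps)
  finally have "a = c * x - d * y"
    using assms(1) by simp
  have "n * b = (a * x + b * y) * y + (b * x - a * y) * x"
    unfolding assms(2)[symmetric] by (simp add: power2_eq_square algebra_simps)
  also have "\<dots> = n * (c * y + d * x)"
    unfolding c d by (simp add: algebra_simps)
  finally have "b = c * y + d * x"
    using assms(1) by simp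
  show ?thesis
    using sum_squares_eq_one_int[OF \<open>c\<^sup>2 + d\<^sup>2 = 1\<close>] \<open>a = c * x - d * y\<close> \<open>b = c * y + d * x\<close>
    by auto
qed

lemma prim_reps_same_sqrt:
  fixes n t x y a b :: int
  assumes "n > 0" "n dvd t\<^sup>2 + 1" "x\<^sup>2 + y\<^sup>2 = n" "[x = t * y] (mod n)"
    "a\<^sup>2 + b\<^sup>2 = n" "[a = t * b] (mod n)"
  shows "(a, b) \<in> {(x, y), (-y, x), (-x, -y), (y, -x)}"
proof (rule sum_squares_unit_multiple[OF assms(1,3,5)])
  have xy: "n dvd x - t * y" and ab: "n dvd a - t * b"
    using assms(4,6) by (simp_all add: cong_iff_dvd_diff)
  have "n dvd (a - t * b) * x + (x - t * y) * (b * t) + (t\<^sup>2 + 1) * (b * y)"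
    by (intro ab xy assms(2) dvd_add dvd_mult2)
  also have "(a - t * b) * x + (x - t * y) * (b * t) + (t\<^sup>2 + 1) * (b * y) = a * x + b * y"
    by (simp add: power2_eq_square algebra_simps)
  finally show "n dvd a * x + b * y" .
  have "n dvd (x - t * y) * b - (a - t * b) * y"
    by (intro ab xy dvd_diff dvd_mult2)
  also have "(x - t * y) * b - (a - t * b) * y = b * x - a * y"
    by (simp add: algebra_simps)
  finally show "n dvd b * x - a * y" .
qed

lemma coprime_of_cong_sqrt_minus_one:
  fixes n t x y :: int
  assumes "n \<noteq> 0" "x\<^sup>2 + y\<^sup>2 = n" "n dvd t\<^sup>2 + 1" "[x = t * y] (mod n)"
  shows "coprime x y"
proof -
  have xy: "n dvd x - t * y"
    using assms(4) by (simp add: cong_iff_dvd_diff)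
  have "n dvd (x - t * y) * t + (t\<^sup>2 + 1) * y"
    by (intro xy assms(3) dvd_add dvd_mult2)
  also have "(x - t * y) * t + (t\<^sup>2 + 1) * y = t * x + y"
    by (simp add: power2_eq_square algebra_simps)
  finally obtain c where c: "t * x + y = n * c" ..
  obtain d where d: "x - t * y = n * d"
    using xy ..
  have "n * 1 = (t * x + y) * y + (x - t * y) * x"
    unfolding assms(2)[symmetric] by (simp add: power2_eq_square algebra_simps)
  also have "\<dots> = n * (d * x + c * y)"
    unfolding c d by (simp add: algebra_simps)
  finally have "d * x + c * y = 1"
    using assms(1) by simp
  show ?thesis
  proof (rule coprimeI)
    fix e assume "e dvd x" "e dvd y"
    then have "e dvd d * x + c * y"
      by simp
    then show "is_unit e"
      using \<open>d * x + c * y = 1\<close> by simp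
  qed
qed

text \<open>The box {0..l} \<times> {0..<l} has l (l + 1) > l^2 points; it is one shorter in the second
  coordinate so that the resulting x^2 + y^2 stays below 2 l^2.\<close>
lemma thue_lemma_square:
  fixes l t :: int
  assumes "l \<ge> 1"
  obtains x y where "\<bar>x\<bar> \<le> l" "\<bar>y\<bar> < l" "(x, y) \<noteq> (0, 0)" "[x = t * y] (mod l\<^sup>2)"
proof -
  define A where "A = {0..l} \<times> {0..<l}"
  define g where "g = (\<lambda>(u, v). (u - t * v) mod l\<^sup>2)"
  have "g ` A \<subseteq> {0..<l\<^sup>2}"
    unfolding g_def using assms by auto
  then have "card (g ` A) \<le> card {0..<l\<^sup>2}"
    by (intro card_mono) auto
  also have "\<dots> < card A"
    unfolding A_def using assms by (simp add: card_cartesian_product power2_eq_square nat_mult_distrib)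
  finally have "\<not> inj_on g A"
    using pigeonhole by blast
  then obtain u v u' v' where uv: "(u, v) \<in> A" "(u', v') \<in> A" "(u, v) \<noteq> (u', v')"
    and g: "g (u, v) = g (u', v')"
    unfolding inj_on_def by auto
  have "l\<^sup>2 dvd (u - t * v) - (u' - t * v')"
    using g unfolding g_def by (simp add: mod_eq_dvd_iff)
  moreover have "(u - t * v) - (u' - t * v') = (u - u') - t * (v - v')"
    by (simp add: algebra_simps)
  ultimately have "[u - u' = t * (v - v')] (mod l\<^sup>2)"
    by (simp add: cong_iff_dvd_diff)
  moreover have "\<bar>u - u'\<bar> \<le> l" "\<bar>v - v'\<bar> < l" "(u - u', v - v') \<noteq> (0, 0)"
    using uv unfolding A_def by auto
  ultimately show thesis
    using that by blast
qed

lemma exists_prim_rep_of_sqrt_minus_one: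
  fixes l t :: int
  assumes "l \<ge> 1" "t \<in> sqrts_minus_one (l\<^sup>2)"
  obtains x y where "(x, y) \<in> prim_reps (l\<^sup>2)" "[x = t * y] (mod l\<^sup>2)"
proof -
  obtain x y where xy: "\<bar>x\<bar> \<le> l" "\<bar>y\<bar> < l" "(x, y) \<noteq> (0, 0)" "[x = t * y] (mod l\<^sup>2)"
    using thue_lemma_square[OF assms(1)] .
  have t: "l\<^sup>2 dvd t\<^sup>2 + 1"
    using assms(2) unfolding sqrts_minus_one_def by simp
  have "[x\<^sup>2 + y\<^sup>2 = (t\<^sup>2 + 1) * y\<^sup>2] (mod l\<^sup>2)"
    using cong_add[OF cong_pow[OF xy(4), of 2] cong_refl[of "y\<^sup>2"]]
    by (simp add: power_mult_distrib algebra_simps)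
  then have "l\<^sup>2 dvd x\<^sup>2 + y\<^sup>2"
    using t by (simp add: cong_dvd_iff dvd_mult2)
  then obtain k where k: "x\<^sup>2 + y\<^sup>2 = l\<^sup>2 * k" ..
  have "x\<^sup>2 \<le> l\<^sup>2"
    using power_mono[OF xy(1) abs_ge_zero, of 2] by simp
  moreover have "y\<^sup>2 < l\<^sup>2"
    using power_strict_mono[OF xy(2) abs_ge_zero, of 2] by simp
  moreover have "x\<^sup>2 + y\<^sup>2 > 0"
    using xy(3) by (simp add: sum_power2_gt_zero_iff)
  ultimately have "0 < l\<^sup>2 * k" "l\<^sup>2 * k < l\<^sup>2 * 2"
    unfolding k[symmetric] by linarith+
  then have "k = 1"
    using assms(1) by (simp add: zero_less_mult_iff mult_less_cancel_left)
  then have sq: "x\<^sup>2 + y\<^sup>2 = l\<^sup>2"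
    using k by simp
  have "coprime x y"
    using coprime_of_cong_sqrt_minus_one[OF _ sq t xy(4)] assms(1) by simp
  then show thesis
    using that xy(4) sq unfolding prim_reps_def by blast
qed

definition prim_reps_with_sqrt :: "int \<Rightarrow> int \<Rightarrow> (int \<times> int) set" where
  "prim_reps_with_sqrt n t = {(x, y) \<in> prim_reps n. [x = t * y] (mod n)}"

lemma card_prim_reps_with_sqrt:
  fixes l t :: int
  assumes "l \<ge> 1" "t \<in> sqrts_minus_one (l\<^sup>2)"
  shows "card (prim_reps_with_sqrt (l\<^sup>2) t) = 4"
proof -
  define n where "n = l\<^sup>2"
  define F where "F = prim_reps_with_sqrt n t"
  have n: "n > 0" "n dvd t\<^sup>2 + 1"
    using assms unfolding n_def sqrts_minus_one_def by auto
  obtain x y where xy: "(x, y) \<in> F"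
    using exists_prim_rep_of_sqrt_minus_one[OF assms] unfolding F_def n_def prim_reps_with_sqrt_def
    by blast
  have rotate: "(-b, a) \<in> F" if "(a, b) \<in> F" for a b
    using that prim_rep_rotate[OF _ n(2)] unfolding F_def prim_reps_with_sqrt_def by auto
  have F_eq: "F = {(x, y), (-y, x), (-x, -y), (y, -x)}"
  proof
    have x: "x\<^sup>2 + y\<^sup>2 = n" "[x = t * y] (mod n)"
      using xy unfolding F_def prim_reps_with_sqrt_def prim_reps_def by auto
    show "F \<subseteq> {(x, y), (-y, x), (-x, -y), (y, -x)}"
    proof
      fix p assume "p \<in> F"
      then obtain a b where "p = (a, b)" "a\<^sup>2 + b\<^sup>2 = n" "[a = t * b] (mod n)"
        unfolding F_def prim_reps_with_sqrt_def prim_reps_def by auto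
      then show "p \<in> {(x, y), (-y, x), (-x, -y), (y, -x)}"
        using prim_reps_same_sqrt[OF n x] by simp
    qed
    show "{(x, y), (-y, x), (-x, -y), (y, -x)} \<subseteq> F"
      using xy rotate[OF xy] rotate[OF rotate[OF xy]] rotate[OF rotate[OF rotate[OF xy]]] by auto
  qed
  have "(x, y) \<noteq> (0, 0)"
    using xy n(1) unfolding F_def prim_reps_with_sqrt_def prim_reps_def by auto
  then have "card F = 4"
    unfolding F_eq by auto
  then show ?thesis
    unfolding F_def n_def .
qed

lemma card_prim_reps_square:
  fixes l :: int
  assumes "l \<ge> 1"
  shows "card (prim_reps (l\<^sup>2)) = 4 * card (sqrts_minus_one (l\<^sup>2))"
proof -
  define n where "n = l\<^sup>2"
  have "n > 0"
    using assms unfolding n_def by simp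
  have "prim_reps n \<subseteq> (\<Union>t \<in> sqrts_minus_one n. prim_reps_with_sqrt n t)"
  proof
    fix p assume p: "p \<in> prim_reps n"
    obtain x y where xy: "p = (x, y)"
      by (cases p)
    obtain t where "t \<in> sqrts_minus_one n" "[x = t * y] (mod n)"
      using sqrt_minus_one_of_prim_rep[OF _ \<open>n > 0\<close>] p unfolding xy by blast
    then show "p \<in> (\<Union>t \<in> sqrts_minus_one n. prim_reps_with_sqrt n t)"
      using p unfolding xy prim_reps_with_sqrt_def by blast
  qed
  then have "prim_reps n = (\<Union>t \<in> sqrts_minus_one n. prim_reps_with_sqrt n t)"
    unfolding prim_reps_with_sqrt_def by blast
  moreover have "finite (prim_reps_with_sqrt n t)" for t
    unfolding prim_reps_with_sqrt_def using finite_prim_reps by (rule finite_subset[rotated]) auto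
  moreover have "prim_reps_with_sqrt n s \<inter> prim_reps_with_sqrt n t = {}"
    if "s \<in> sqrts_minus_one n" "t \<in> sqrts_minus_one n" "s \<noteq> t" for s t
    using that sqrt_minus_one_of_prim_rep_unique[of _ _ n s t] unfolding prim_reps_with_sqrt_def
    by auto
  ultimately have "card (prim_reps n) = (\<Sum>t \<in> sqrts_minus_one n. card (prim_reps_with_sqrt n t))"
    by (simp add: card_UN_disjoint finite_sqrts_minus_one)
  also have "\<dots> = (\<Sum>t \<in> sqrts_minus_one n. 4)"
    unfolding n_def using card_prim_reps_with_sqrt[OF assms] by simp
  finally show ?thesis
    unfolding n_def by simp
qed

section \<open>Rational orthogonal 2 \<times> 2 matrices\<close>

text \<open>The rotation (s = 1) or reflection (s = -1) with first column (a, b).\<close>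
definition orth_matrix :: "rat \<Rightarrow> rat \<Rightarrow> rat \<Rightarrow> rat^2^2" where
  "orth_matrix a b s =
     (\<chi> i j. if i = 1 then (if j = 1 then a else - s * b) else (if j = 1 then b else s * a))"

lemma orth_matrix_nth [simp]:
  "orth_matrix a b s $ 1 $ 1 = a" "orth_matrix a b s $ 1 $ 2 = - s * b"
  "orth_matrix a b s $ 2 $ 1 = b" "orth_matrix a b s $ 2 $ 2 = s * a"
  unfolding orth_matrix_def by simp_all

lemma rat_orthogonal_orth_matrix:
  assumes "a\<^sup>2 + b\<^sup>2 = 1" "s\<^sup>2 = 1"
  shows "rat_orthogonal (orth_matrix a b s)"
proof -
  have "s * s = 1" "a * a + b * b = 1"
    using assms by (simp_all add: power2_eq_square)
  then show ?thesis
    unfolding rat_orthogonal_def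
    by (simp add: vec_eq_iff forall_2 matrix_matrix_mult_def transpose_def mat_def sum_2
        algebra_simps flip: distrib_left distrib_right)
qed

lemma rat_orthogonal_2E:
  fixes Q :: "rat^2^2"
  assumes "rat_orthogonal Q"
  obtains a b s where "a\<^sup>2 + b\<^sup>2 = 1" "s = 1 \<or> s = -1" "Q = orth_matrix a b s"
proof -
  define a b c d where "a = Q $ 1 $ 1" and "b = Q $ 2 $ 1" and "c = Q $ 1 $ 2" and "d = Q $ 2 $ 2"
  have "Q $ 1 $ i * Q $ 1 $ j + Q $ 2 $ i * Q $ 2 $ j = (transpose Q ** Q) $ i $ j" for i j
    by (simp add: matrix_matrix_mult_def transpose_def sum_2)
  also have "(transpose Q ** Q) $ i $ j = (if i = j then 1 else 0)" for i j
    using assms unfolding rat_orthogonal_def by (simp add: mat_def)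
  finally have entries: "Q $ 1 $ i * Q $ 1 $ j + Q $ 2 $ i * Q $ 2 $ j = (if i = j then 1 else 0)"
    for i j .
  have e1: "a * a + b * b = 1" and e2: "a * c + b * d = 0" and e3: "c * c + d * d = 1"
    using entries[of 1 1] entries[of 1 2] entries[of 2 2] unfolding a_def b_def c_def d_def
    by simp_all
  define s where "s = a * d - b * c"
  have "s\<^sup>2 = (a * a + b * b) * (c * c + d * d) - (a * c + b * d)\<^sup>2"
    unfolding s_def by (simp add: power2_eq_square algebra_simps)
  then have "s = 1 \<or> s = -1"
    using e1 e2 e3 power2_eq_1_iff by auto
  have "c + s * b = a * (a * c + b * d) + c * (1 - (a * a + b * b))"
    unfolding s_def by (simp add: algebra_simps)
  then have "c = - s * b"
    using e1 e2 by simp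
  have "d - s * a = d * (1 - (a * a + b * b)) + b * (a * c + b * d)"
    unfolding s_def by (simp add: algebra_simps)
  then have "d = s * a"
    using e1 e2 by simp
  have "Q = orth_matrix a b s"
    unfolding vec_eq_iff forall_2 using \<open>c = - s * b\<close> \<open>d = s * a\<close>
    unfolding a_def b_def c_def d_def by simp
  moreover have "a\<^sup>2 + b\<^sup>2 = 1"
    using e1 by (simp add: power2_eq_square)
  ultimately show thesis
    using that \<open>s = 1 \<or> s = -1\<close> by blast
qed

lemma int_matrix_scaled_orth_matrix:
  assumes "s = 1 \<or> s = -1"
  shows "int_matrix (\<chi> i j. of_nat k * orth_matrix a b s $ i $ j) \<longleftrightarrow>
         of_nat k * a \<in> \<int> \<and> of_nat k * b \<in> \<int>"
  using assms unfolding int_matrix_def by (auto simp: forall_2 minus_in_Ints_iff)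

lemma level_orth_matrix:
  assumes "s = 1 \<or> s = -1"
  shows "level (orth_matrix a b s) = (LEAST k. 1 \<le> k \<and> of_nat k * a \<in> \<int> \<and> of_nat k * b \<in> \<int>)"
  unfolding level_def int_matrix_scaled_orth_matrix[OF assms] ..

lemma of_nat_mult_fraction_in_Ints_iff:
  fixes x :: int and k l :: nat
  assumes "l > 0"
  shows "(of_nat k :: rat) * (of_int x / of_nat l) \<in> \<int> \<longleftrightarrow> int l dvd int k * x"
proof -
  have eq: "(of_nat k :: rat) * (of_int x / of_nat l) = of_int m \<longleftrightarrow> int k * x = int l * m" for m
  proof -
    have "(of_nat k :: rat) * (of_int x / of_nat l) = of_int m \<longleftrightarrow>
          (of_int (int k * x) :: rat) = of_int (int l * m)"
      using assms by (simp add: field_simps)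
    then show ?thesis
      by (simp only: of_int_eq_iff)
  qed
  show ?thesis
  proof
    assume "(of_nat k :: rat) * (of_int x / of_nat l) \<in> \<int>"
    then obtain m where "(of_nat k :: rat) * (of_int x / of_nat l) = of_int m"
      by (auto elim: Ints_cases)
    then show "int l dvd int k * x"
      unfolding eq by simp
  next
    assume "int l dvd int k * x"
    then obtain m where "int k * x = int l * m" ..
    then show "(of_nat k :: rat) * (of_int x / of_nat l) \<in> \<int>"
      unfolding eq[symmetric] by simp
  qed
qed

lemma level_orth_matrix_fraction:
  fixes x y :: int and l :: nat
  assumes "l > 0" "coprime x y" "s = 1 \<or> s = -1"
  shows "level (orth_matrix (of_int x / of_nat l) (of_int y / of_nat l) s) = l"
  unfolding level_orth_matrix[OF assms(3)] of_nat_mult_fraction_in_Ints_iff[OF assms(1)]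
proof (rule Least_equality)
  show "1 \<le> l \<and> int l dvd int l * x \<and> int l dvd int l * y"
    using assms(1) by simp
next
  fix k assume k: "1 \<le> k \<and> int l dvd int k * x \<and> int l dvd int k * y"
  then have "int l dvd gcd (int k * x) (int k * y)"
    by simp
  also have "gcd (int k * x) (int k * y) = int k"
    using assms(2) by (simp add: gcd_mult_left)
  finally show "l \<le> k"
    using k by (simp add: dvd_imp_le)
qed

lemma rat_common_denominator:
  fixes a b :: rat
  obtains k :: nat where "k \<ge> 1" "of_nat k * a \<in> \<int>" "of_nat k * b \<in> \<int>"
proof -
  obtain na da nb db where qa: "quotient_of a = (na, da)" and qb: "quotient_of b = (nb, db)"
    by (cases "quotient_of a", cases "quotient_of b") auto
  have "da > 0" "db > 0"
    using quotient_of_denom_pos[OF qa] quotient_of_denom_pos[OF qb] .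
  define k where "k = nat da * nat db"
  have "k \<ge> 1"
    unfolding k_def using \<open>da > 0\<close> \<open>db > 0\<close> by (simp add: Suc_le_eq)
  moreover have "of_nat k * a = of_int (db * na)" "of_nat k * b = of_int (da * nb)"
    unfolding k_def quotient_of_div[OF qa] quotient_of_div[OF qb]
    using \<open>da > 0\<close> \<open>db > 0\<close> by (simp_all add: field_simps)
  ultimately show thesis
    using that by (metis Ints_of_int)
qed

lemma gcd_least_common_denominator:
  fixes a b :: rat and x y :: int and l :: nat
  assumes "l \<ge> 1" "of_nat l * a = of_int x" "of_nat l * b = of_int y"
    and minimal: "\<And>k. k \<ge> 1 \<Longrightarrow> of_nat k * a \<in> \<int> \<Longrightarrow> of_nat k * b \<in> \<int> \<Longrightarrow> l \<le> k"
  shows "gcd (gcd x y) (int l) = 1"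
proof -
  define g where "g = gcd (gcd x y) (int l)"
  have "g > 0"
    using assms(1) unfolding g_def by simp
  obtain x' y' l' where x': "x = g * x'" and y': "y = g * y'" and l': "int l = g * l'"
    unfolding g_def by (meson dvd_def dvd_trans gcd_dvd1 gcd_dvd2)
  have "l' > 0"
    using l' \<open>g > 0\<close> assms(1) zero_less_mult_pos[of g l'] by simp
  have "of_int (g * l') * a = (of_int (g * x') :: rat)" "of_int (g * l') * b = (of_int (g * y') :: rat)"
    unfolding l'[symmetric] x'[symmetric] y'[symmetric] using assms(2,3) by simp_all
  then have "of_int l' * a = (of_int x' :: rat)" "of_int l' * b = (of_int y' :: rat)"
    using \<open>g > 0\<close> by (simp_all add: mult.assoc)
  then have "of_nat (nat l') * a = of_int x'" "of_nat (nat l') * b = of_int y'"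
    using \<open>g > 0\<close> \<open>l' > 0\<close> by simp_all
  then have "l \<le> nat l'"
    using \<open>l' > 0\<close> by (intro minimal) auto
  then have "g * l' \<le> 1 * l'"
    using l' le_nat_iff[of l' l] \<open>l' > 0\<close> by simp
  then have "g = 1"
    using \<open>g > 0\<close> \<open>l' > 0\<close> by (simp add: mult_le_cancel_right)
  then show ?thesis
    unfolding g_def .
qed

lemma orth_level_2E:
  fixes Q :: "rat^2^2"
  assumes "Q \<in> orth_level l"
  obtains s x y where "s = 1 \<or> s = -1" "(x, y) \<in> prim_reps (int l ^ 2)"
    "Q = orth_matrix (of_int x / of_nat l) (of_int y / of_nat l) s"
proof -
  have "rat_orthogonal Q"
    using assms unfolding orth_level_def by simp
  then obtain a b s where ab: "a\<^sup>2 + b\<^sup>2 = 1" and s: "s = 1 \<or> s = -1" and Q: "Q = orth_matrix a b s"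
    by (rule rat_orthogonal_2E)
  define P where "P k \<longleftrightarrow> 1 \<le> k \<and> of_nat k * a \<in> \<int> \<and> of_nat k * b \<in> \<int>" for k :: nat
  have l: "l = (LEAST k. P k)"
    using assms level_orth_matrix[OF s] unfolding orth_level_def Q P_def by simp
  obtain k where "P k"
    using rat_common_denominator[of a b] unfolding P_def by blast
  then have "P l" and minimal: "\<And>k. P k \<Longrightarrow> l \<le> k"
    unfolding l by (auto intro: LeastI Least_le)
  then have "l \<ge> 1"
    unfolding P_def by simp
  obtain x y where x: "of_nat l * a = of_int x" and y: "of_nat l * b = of_int y"
    using \<open>P l\<close> unfolding P_def by (auto elim!: Ints_cases)
  have "(of_int (x\<^sup>2 + y\<^sup>2) :: rat) = (of_nat l)\<^sup>2 * (a\<^sup>2 + b\<^sup>2)"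
    by (simp add: power_mult_distrib algebra_simps flip: x y)
  then have sq: "x\<^sup>2 + y\<^sup>2 = int l ^ 2"
    using ab by (metis mult_1_right of_int_eq_iff of_int_of_nat_eq of_int_power)
  have "gcd x y ^ 2 dvd int l ^ 2"
    unfolding sq[symmetric] by (simp add: dvd_add)
  then have "gcd x y = gcd (gcd x y) (int l)"
    by (simp add: pow_divides_pow_iff gcd_proj1_iff)
  also have "\<dots> = 1"
    using gcd_least_common_denominator[OF \<open>l \<ge> 1\<close> x y] minimal unfolding P_def by blast
  finally have "(x, y) \<in> prim_reps (int l ^ 2)"
    using sq unfolding prim_reps_def by (simp add: coprime_iff_gcd_eq_1)
  moreover have "a = of_int x / of_nat l" "b = of_int y / of_nat l"
    using x y \<open>l \<ge> 1\<close> by (simp_all add: eq_divide_eq mult.commute)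
  ultimately show thesis
    using that s unfolding Q by blast
qed

lemma orth_level_2_eq_image:
  assumes "l \<ge> 1"
  shows "(orth_level l :: (rat^2^2) set) =
    (\<lambda>(s, x, y). orth_matrix (of_int x / of_nat l) (of_int y / of_nat l) s) `
      ({1, -1} \<times> prim_reps (int l ^ 2))"
    (is "_ = ?f ` ?S")
proof
  show "orth_level l \<subseteq> ?f ` ?S"
  proof
    fix Q :: "rat^2^2" assume "Q \<in> orth_level l"
    then obtain s x y where "s = 1 \<or> s = -1" "(x, y) \<in> prim_reps (int l ^ 2)"
      "Q = orth_matrix (of_int x / of_nat l) (of_int y / of_nat l) s"
      by (rule orth_level_2E)
    then show "Q \<in> ?f ` ?S"
      by (intro image_eqI[of _ _ "(s, x, y)"]) auto
  qed
next
  show "?f ` ?S \<subseteq> orth_level l"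
  proof
    fix Q assume "Q \<in> ?f ` ?S"
    then obtain s x y where s: "s \<in> {1, -1}" and xy: "(x, y) \<in> prim_reps (int l ^ 2)"
      and Q: "Q = orth_matrix (of_int x / of_nat l) (of_int y / of_nat l) s"
      by auto
    have sq: "x\<^sup>2 + y\<^sup>2 = int l ^ 2" and "coprime x y"
      using xy unfolding prim_reps_def by auto
    have "(of_int x)\<^sup>2 + (of_int y)\<^sup>2 = (of_nat l ^ 2 :: rat)"
      using arg_cong[OF sq, of "of_int :: int \<Rightarrow> rat"] by simp
    then have "(of_int x / of_nat l :: rat)\<^sup>2 + (of_int y / of_nat l)\<^sup>2 = 1"
      using assms by (simp add: power_divide add_divide_distrib[symmetric])
    then show "Q \<in> orth_level l"
      using s assms \<open>coprime x y\<close> unfolding Q orth_level_def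
      by (auto intro: rat_orthogonal_orth_matrix level_orth_matrix_fraction)
  qed
qed

lemma card_orth_level_2:
  assumes "l \<ge> 1"
  shows "card (orth_level l :: (rat^2^2) set) = 2 * card (prim_reps (int l ^ 2))"
proof -
  let ?f = "\<lambda>(s, x, y). orth_matrix (of_int x / of_nat l) (of_int y / of_nat l) s"
  have "inj_on ?f ({1, -1} \<times> prim_reps (int l ^ 2))"
  proof (rule inj_onI)
    fix p p' assume p: "p \<in> {1, -1} \<times> prim_reps (int l ^ 2)" and eq: "?f p = ?f p'"
    obtain s x y s' x' y' where pp: "p = (s, x, y)" "p' = (s', x', y')"
      by (cases p, cases p') auto
    have "x = x'" "y = y'"
      using arg_cong[OF eq, of "\<lambda>M. M $ 1 $ 1"] arg_cong[OF eq, of "\<lambda>M. M $ 2 $ 1"] assms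
      unfolding pp by simp_all
    moreover have "(x, y) \<noteq> (0, 0)"
      using p assms unfolding pp prim_reps_def by auto
    ultimately show "p = p'"
      using arg_cong[OF eq, of "\<lambda>M. M $ 2 $ 2"] arg_cong[OF eq, of "\<lambda>M. M $ 1 $ 2"] assms
      unfolding pp by auto
  qed
  then show ?thesis
    unfolding orth_level_2_eq_image[OF assms] by (simp add: card_image card_cartesian_product)
qed

lemma finite_orth_level_2:
  assumes "l \<ge> 1"
  shows "finite (orth_level l :: (rat^2^2) set)"
  unfolding orth_level_2_eq_image[OF assms] by (simp add: finite_prim_reps)

theorem proposition3p1:
  fixes l :: nat
  assumes "l \<ge> 2"
  shows "(orth_level l \<noteq> ({} :: (rat^2^2) set)
           \<longleftrightarrow> (\<forall>p \<in> prime_factors l. p mod 4 = 1))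
       \<and> ((\<forall>p \<in> prime_factors l. p mod 4 = 1) \<longrightarrow>
           card (orth_level l :: (rat^2^2) set) = 2 ^ (card (prime_factors l) + 3))"
proof -
  have "l \<ge> 1"
    using assms by simp
  have card: "card (orth_level l :: (rat^2^2) set) = 8 * card (sqrts_minus_one (int l ^ 2))"
    using card_orth_level_2[OF \<open>l \<ge> 1\<close>] card_prim_reps_square[of "int l"] \<open>l \<ge> 1\<close> by simp
  have roots: "card (sqrts_minus_one (int l ^ 2)) = 2 ^ card (prime_factors l)"
    if "\<forall>p \<in> prime_factors l. p mod 4 = 1"
    using card_sqrts_minus_one[of "l\<^sup>2"] that \<open>l \<ge> 1\<close> by (simp add: prime_factors_power)
  have no_roots: "sqrts_minus_one (int l ^ 2) = {}"
    if "\<not> (\<forall>p \<in> prime_factors l. p mod 4 = 1)"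
    using that sqrts_minus_one_square_eq_empty by blast
  have "finite (orth_level l :: (rat^2^2) set)"
    using finite_orth_level_2[OF \<open>l \<ge> 1\<close>] .
  then show ?thesis
    using card roots no_roots by (cases "\<forall>p \<in> prime_factors l. p mod 4 = 1") (auto simp: power_add)
qed

end
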